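(* Let $a,b$ be integers such that $q=a^3+5a^2b-8ab^2+b^3$ is a (positive) prime. Then $q\equiv\pm1\pmod 7$; moreover $q\equiv 1\pmod 7$ if and only if $\left(\frac{-7(a^2-ab+b^2)}{q}\right)=1$, and $q\equiv -1\pmod 7$ if and only if $\left(\frac{-7(a^2-ab+b^2)}{q}\right)=-1$.
   Context: $\left(\frac{\cdot}{q}\right)$ denotes the Legendre symbol modulo $q$. *)

theory Defs
  imports "HOL-Number_Theory.Number_Theory"
begin

end

theory Submission
  imports Defs
begin

text \<open>Modulo 7 the form a^3 + 5a^2b - 8ab^2 + b^3 is congruent to the cube (b - 5a)^3, and cubes
  modulo 7 are 0, 1 or -1; when 7 divides b - 5a the form is divisible by 49, impossible for a
  prime q. For the Legendre symbol, the identity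
  (3a^2 + 10ab - 8b^2)^2 = (7b)^2 (a^2 - ab + b^2) + (9a + 15b) q
  shows that a^2 - ab + b^2 is a nonzero square modulo q, so the symbol equals (-7/q), which by
  quadratic reciprocity is (q/7), i.e. 1 or -1 according as q is 1 or -1 modulo 7.\<close>

lemma euler_criterion_int:
  fixes p a :: int
  assumes "prime p" "2 < p"
  shows "[Legendre a p = a ^ nat ((p - 1) div 2)] (mod p)"
proof -
  have "prime (nat p)" "2 < nat p" "int (nat p) = p"
    using assms by auto
  moreover have "(nat p - 1) div 2 = nat ((p - 1) div 2)"
    using assms(2) by linarith
  ultimately show ?thesis
    using euler_criterion[of "nat p" a] by simp
qed

lemma abs_Legendre_le_1: "\<bar>Legendre a p\<bar> \<le> 1"
  by (simp add: Legendre_def)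

lemma cong_abs_le_1_imp_eq:
  fixes x y m :: int
  assumes "[x = y] (mod m)" "2 < m" "\<bar>x\<bar> \<le> 1" "\<bar>y\<bar> \<le> 1"
  shows "x = y"
proof (rule ccontr)
  assume "x \<noteq> y"
  then have "x - y \<noteq> 0" by simp
  moreover have "m dvd x - y" using assms(1) by (simp add: cong_iff_dvd_diff)
  ultimately have "\<bar>m\<bar> \<le> \<bar>x - y\<bar>" by (rule dvd_imp_le_int)
  then show False using assms(2-4) by linarith
qed

lemma Legendre_cong:
  assumes "[a = b] (mod p)"
  shows "Legendre a p = Legendre b p"
proof -
  have "[a = 0] (mod p) \<longleftrightarrow> [b = 0] (mod p)"
    using assms by (meson cong_sym cong_trans)
  moreover have "QuadRes p a \<longleftrightarrow> QuadRes p b"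
    using assms unfolding QuadRes_def by (meson cong_sym cong_trans)
  ultimately show ?thesis by (simp add: Legendre_def)
qed

lemma Legendre_square:
  fixes p x :: int
  assumes "prime p" "\<not> p dvd x"
  shows "Legendre (x^2) p = 1"
proof -
  have "\<not> p dvd x^2" using assms prime_dvd_power by blast
  moreover have "QuadRes p (x^2)" unfolding QuadRes_def by (auto intro: cong_refl)
  ultimately show ?thesis by (simp add: Legendre_def cong_0_iff)
qed

lemma Legendre_mult:
  fixes p a b :: int
  assumes "prime p" "2 < p"
  shows "Legendre (a * b) p = Legendre a p * Legendre b p"
proof (rule cong_abs_le_1_imp_eq[OF _ \<open>2 < p\<close>])
  let ?k = "nat ((p - 1) div 2)"
  have "[Legendre (a * b) p = a ^ ?k * b ^ ?k] (mod p)"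
    using euler_criterion_int[OF assms, of "a * b"] by (simp add: power_mult_distrib)
  also have "[a ^ ?k * b ^ ?k = Legendre a p * Legendre b p] (mod p)"
    using euler_criterion_int[OF assms] by (intro cong_mult) (simp_all add: cong_sym)
  finally show "[Legendre (a * b) p = Legendre a p * Legendre b p] (mod p)" .
  show "\<bar>Legendre a p * Legendre b p\<bar> \<le> 1"
    by (simp add: abs_mult mult_le_one abs_Legendre_le_1)
qed (rule abs_Legendre_le_1)

lemma Legendre_minus_one:
  fixes p :: int
  assumes "prime p" "2 < p"
  shows "Legendre (-1) p = (-1) ^ nat ((p - 1) div 2)"
proof (rule cong_abs_le_1_imp_eq[OF euler_criterion_int[OF assms] \<open>2 < p\<close>])
  show "\<bar>(-1::int) ^ nat ((p - 1) div 2)\<bar> \<le> 1"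
    unfolding power_abs by simp
qed (rule abs_Legendre_le_1)

lemma Legendre_minus_seven:
  fixes p :: int
  assumes "prime p" "2 < p" "p \<noteq> 7"
  shows "Legendre (-7) p = Legendre p 7"
proof -
  define k where "k = nat ((p - 1) div 2)"
  have "\<not> p dvd 7"
    using assms primes_dvd_imp_eq[of p 7] by auto
  then have L7: "Legendre 7 p = 1 \<or> Legendre 7 p = -1"
    by (auto simp: Legendre_def cong_0_iff)
  have "Legendre 7 p * Legendre p 7 = (-1) ^ (3 * k)"
    using Quadratic_Reciprocity_int[of 7 p] assms unfolding k_def by (simp add: nat_mult_distrib)
  moreover have "((-1::int) ^ k) ^ 3 = (-1) ^ k"
    by (cases "even k") auto
  ultimately have "Legendre p 7 = (-1) ^ k * Legendre 7 p"
    using L7 by (auto simp: power_mult)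
  also have "\<dots> = Legendre (-1) p * Legendre 7 p"
    unfolding Legendre_minus_one[OF assms(1,2)] k_def ..
  also have "\<dots> = Legendre (-1 * 7) p"
    by (rule Legendre_mult[OF assms(1,2), symmetric])
  finally show ?thesis by simp
qed

lemma Legendre_seven:
  fixes q :: int
  shows "q mod 7 = 1 \<Longrightarrow> Legendre q 7 = 1"
    and "q mod 7 = 6 \<Longrightarrow> Legendre q 7 = -1"
proof -
  have "Legendre q 7 = Legendre (q mod 7) 7"
    by (rule Legendre_cong) (simp add: cong_def)
  moreover have "Legendre 1 7 = 1"
    using Legendre_square[of 7 1] by simp
  moreover have "Legendre 6 7 = -1"
    using Legendre_cong[of 6 "-1" 7] Legendre_minus_one[of 7] by (simp add: cong_def)
  ultimately show "q mod 7 = 1 \<Longrightarrow> Legendre q 7 = 1" "q mod 7 = 6 \<Longrightarrow> Legendre q 7 = -1"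
    by simp_all
qed

lemma Legendre_mult_square:
  fixes p x a :: int
  assumes "prime p" "2 < p" "\<not> p dvd x"
  shows "Legendre (x^2 * a) p = Legendre a p"
  using Legendre_mult[OF assms(1,2)] Legendre_square[OF assms(1,3)] by simp

definition cubic_form :: "int \<Rightarrow> int \<Rightarrow> int" where
  "cubic_form a b = a^3 + 5*a^2*b - 8*a*b^2 + b^3"

lemma cube_mod_7: "(x::int)^3 mod 7 \<in> {0, 1, 6}"
proof -
  have "x mod 7 \<in> {0..6}" by simp
  then have "x mod 7 \<in> {0, 1, 2, 3, 4, 5, 6}" by auto
  moreover have "x^3 mod 7 = (x mod 7)^3 mod 7"
    by (simp add: power_mod)
  ultimately show ?thesis by auto
qed

lemma cubic_form_cong_cube: "[cubic_form a b = (b - 5*a)^3] (mod 7)"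
proof -
  have "cubic_form a b = (b - 5*a)^3 + 7 * (18*a^3 - 10*a^2*b + a*b^2)"
    unfolding cubic_form_def by (simp add: algebra_simps power2_eq_square power3_eq_cube)
  then show ?thesis by (simp add: cong_iff_dvd_diff)
qed

lemma cubic_form_dvd_49:
  assumes "7 dvd b - 5*a"
  shows "49 dvd cubic_form a b"
proof -
  obtain t where "b = 5*a + 7*t" using assms by (auto simp: dvd_def algebra_simps)
  then have "cubic_form a b = 49 * (7*a*t^2 + 7*t^3 - a^3)"
    unfolding cubic_form_def by (simp add: algebra_simps power2_eq_square power3_eq_cube)
  then show ?thesis by simp
qed

lemma prime_cubic_form_mod_7:
  assumes "prime (cubic_form a b)"
  shows "cubic_form a b mod 7 \<in> {1, 6}"
proof (rule ccontr)
  assume "cubic_form a b mod 7 \<notin> {1, 6}"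
  then have "(b - 5*a)^3 mod 7 = 0"
    using cubic_form_cong_cube[of a b] cube_mod_7[of "b - 5*a"] by (auto simp: cong_def)
  then have "7 dvd b - 5*a"
    using prime_dvd_power[of 7 "b - 5*a" 3] by (simp add: mod_eq_0_iff_dvd)
  then have "7 * 7 dvd cubic_form a b"
    using cubic_form_dvd_49 by simp
  moreover from this have "cubic_form a b = 7"
    using primes_dvd_imp_eq[of 7 "cubic_form a b"] assms dvd_mult_left by auto
  ultimately show False by simp
qed

lemma prime_cubic_form_gt_7:
  assumes "prime (cubic_form a b)"
  shows "7 < cubic_form a b"
proof (rule ccontr)
  let ?q = "cubic_form a b"
  assume "\<not> 7 < ?q"
  moreover have "2 \<le> ?q" using assms by (rule prime_ge_2_int)
  ultimately have "?q \<in> {2, 3, 4, 5, 6, 7}" by auto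
  moreover have "?q \<noteq> 6"
    using assms primes_dvd_imp_eq[of 2 ?q] by auto
  ultimately show False
    using prime_cubic_form_mod_7[OF assms] by auto
qed

lemma prime_cubic_form_not_dvd_snd:
  assumes "prime (cubic_form a b)"
  shows "\<not> cubic_form a b dvd b"
proof
  let ?q = "cubic_form a b"
  assume "?q dvd b"
  have "a^3 = ?q - b * (5*a^2 - 8*a*b + b^2)"
    unfolding cubic_form_def by (simp add: algebra_simps power2_eq_square power3_eq_cube)
  then have "?q dvd a^3"
    using \<open>?q dvd b\<close> by (metis dvd_diff dvd_mult2 dvd_refl)
  obtain d where d: "b = ?q * d" using \<open>?q dvd b\<close> ..
  from \<open>?q dvd a^3\<close> obtain c where c: "a = ?q * c"
    using assms prime_dvd_power by blast
  have "?q * 1 = cubic_form (?q * c) (?q * d)"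
    using arg_cong2[OF c d, of cubic_form] by simp
  also have "\<dots> = ?q * (?q^2 * cubic_form c d)"
    unfolding cubic_form_def by (simp add: algebra_simps power2_eq_square power3_eq_cube)
  finally have "1 = ?q^2 * cubic_form c d"
    using assms by (simp add: prime_gt_0_int)
  then have "?q dvd 1"
    by (metis dvd_triv_left power2_eq_square mult.assoc)
  then show False
    using assms not_prime_unit by blast
qed

lemma prime_cubic_form_not_dvd_norm:
  assumes "prime (cubic_form a b)"
  shows "\<not> cubic_form a b dvd a^2 - a*b + b^2"
proof
  let ?q = "cubic_form a b" and ?N = "a^2 - a*b + b^2"
  assume "?q dvd ?N"
  have "\<not> ?q dvd 7"
    using prime_cubic_form_gt_7[OF assms] zdvd_imp_le by fastforce
  have "b^2 * (3*a + 5*b) = (a + 6*b) * ?N - ?q"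
    unfolding cubic_form_def by (simp add: algebra_simps power2_eq_square power3_eq_cube)
  then have "?q dvd b^2 * (3*a + 5*b)"
    using \<open>?q dvd ?N\<close> by (metis dvd_diff dvd_mult dvd_refl)
  then have "?q dvd 3*a + 5*b"
    using assms prime_cubic_form_not_dvd_snd[OF assms]
    by (metis prime_dvd_mult_iff prime_dvd_power)
  moreover have "7 * (7 * b^2) = 9 * ?N - (3*a + 5*b) * (3*a - 8*b)"
    by (simp add: algebra_simps power2_eq_square)
  ultimately have "?q dvd 7 * (7 * b^2)"
    using \<open>?q dvd ?N\<close> by (metis dvd_diff dvd_mult dvd_mult2)
  then show False
    using assms \<open>\<not> ?q dvd 7\<close> prime_cubic_form_not_dvd_snd[OF assms]
    by (metis prime_dvd_mult_iff prime_dvd_power)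
qed

lemma cubic_form_norm_square_identity:
  "(3*a^2 + 10*a*b - 8*b^2)^2 = (7*b)^2 * (a^2 - a*b + b^2) + (9*a + 15*b) * cubic_form a b"
  unfolding cubic_form_def by (simp add: algebra_simps power2_eq_square power3_eq_cube)

lemma Legendre_cubic_form_norm:
  assumes "prime (cubic_form a b)"
  shows "Legendre (-7 * (a^2 - a*b + b^2)) (cubic_form a b) = Legendre (-7) (cubic_form a b)"
proof -
  let ?q = "cubic_form a b" and ?N = "a^2 - a*b + b^2" and ?H = "3*a^2 + 10*a*b - 8*b^2"
  have "2 < ?q" "\<not> ?q dvd 7"
    using prime_cubic_form_gt_7[OF assms] zdvd_imp_le by fastforce+
  then have "\<not> ?q dvd 7 * b"
    using assms prime_cubic_form_not_dvd_snd by (metis prime_dvd_mult_iff)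
  have HN: "[?H^2 = (7*b)^2 * ?N] (mod ?q)"
    unfolding cubic_form_norm_square_identity by (simp add: cong_def)
  have "\<not> ?q dvd ?H"
  proof
    assume "?q dvd ?H"
    then have "?q dvd ?H^2"
      by (simp add: power2_eq_square)
    then have "?q dvd (7*b)^2 * ?N"
      using cong_dvd_iff[OF HN] by blast
    then show False
      using assms \<open>\<not> ?q dvd 7 * b\<close> prime_cubic_form_not_dvd_norm
      by (metis prime_dvd_mult_iff prime_dvd_power)
  qed
  have "Legendre (-7 * ?N) ?q = Legendre ((7*b)^2 * (-7 * ?N)) ?q"
    using Legendre_mult_square[OF assms \<open>2 < ?q\<close> \<open>\<not> ?q dvd 7 * b\<close>] by simp
  also have "\<dots> = Legendre (((7*b)^2 * ?N) * (-7)) ?q"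
    by (simp only: mult.assoc mult.commute[of "-7"])
  also have "\<dots> = Legendre (?H^2 * (-7)) ?q"
    using HN by (intro Legendre_cong cong_mult cong_refl) (simp add: cong_sym)
  also have "\<dots> = Legendre (-7) ?q"
    using Legendre_mult_square[OF assms \<open>2 < ?q\<close> \<open>\<not> ?q dvd ?H\<close>] .
  finally show ?thesis .
qed

theorem lemma6p4:
  fixes a b q :: int
  assumes "q = a^3 + 5*a^2*b - 8*a*b^2 + b^3"
    and "prime q"
  shows "([q = 1] (mod 7) \<or> [q = -1] (mod 7))
    \<and> ([q = 1] (mod 7) \<longleftrightarrow> Legendre (-7 * (a^2 - a*b + b^2)) q = 1)
    \<and> ([q = -1] (mod 7) \<longleftrightarrow> Legendre (-7 * (a^2 - a*b + b^2)) q = -1)"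
proof -
  have q: "q = cubic_form a b"
    using assms(1) by (simp add: cubic_form_def)
  have "Legendre (-7 * (a^2 - a*b + b^2)) q = Legendre (-7) q"
    using Legendre_cubic_form_norm assms(2) unfolding q by blast
  also have "\<dots> = Legendre q 7"
    using Legendre_minus_seven assms(2) prime_cubic_form_gt_7[of a b] q by simp
  finally have "Legendre (-7 * (a^2 - a*b + b^2)) q = Legendre q 7" .
  moreover have "[q = 1] (mod 7) \<longleftrightarrow> q mod 7 = 1" "[q = -1] (mod 7) \<longleftrightarrow> q mod 7 = 6"
    by (simp_all add: cong_def)
  ultimately show ?thesis
    using prime_cubic_form_mod_7[of a b] assms(2) q Legendre_seven[of q] by auto
qed

end
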